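(* Let $M(C,\bar\xi,\pi)$ be a Myller configuration with Darboux frame $(\bar\xi,\bar\mu,\bar v)$ and invariants $G,K,T$ such that $(G(s),K(s))\neq(0,0)$ for all $s$, and let $\bar W_n$ be its unit ND-vector field. Then $C$ is a $W_n$-helix in $M$ if and only if $C$ is a $\bar\xi$-helix in $M$.
   Context: Let $C$ be a smooth curve in $E^3$ parametrized by arclength $s$; primes denote $d/ds$. A Myller configuration $M(C,\bar\xi,\pi)$ consists of a smooth unit vector field $\bar\xi(s)$ along $C$ and a smooth field of oriented planes $\pi(s)$ with $\bar\xi(s)\in\pi(s)$. Let $\bar v$ be the unit normal of $\pi$ and $\bar\mu=\bar v\times\bar\xi$. The Darboux frame satisfies $\bar\xi'=G\bar\mu+K\bar v$, $\bar\mu'=-G\bar\xi+T\bar v$, $\bar v'=-K\bar\xi-T\bar\mu$. The normal-type Darboux vector (ND-vector) is $W_n=-K\bar\mu+G\bar v$ and $\bar W_n=W_n/\|W_n\|$. $C$ is a $W_n$-helix in $M$ if $\bar W_n$ makes a constant angle with a fixed unit direction $\bar l_n$ (i.e. $\langle\bar W_n,\bar l_n\rangle$ is constant, $\bar l_n$ a constant unit vector). $C$ is a $\bar\xi$-helix in $M$ if $\langle\bar\xi,\bar d_\xi\rangle$ is constant for some constant unit vector $\bar d_\xi$. *)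

theory Defs
  imports "HOL-Analysis.Analysis"
begin

definition smooth_on :: "real set \<Rightarrow> (real \<Rightarrow> 'a::real_normed_vector) \<Rightarrow> bool" where
  "smooth_on I f \<longleftrightarrow> (\<exists>D. D 0 = f \<and> (\<forall>n. \<forall>s\<in>I. (D n has_vector_derivative D (Suc n) s) (at s)))"

definition ND_vector :: "(real \<Rightarrow> real) \<Rightarrow> (real \<Rightarrow> real) \<Rightarrow> (real \<Rightarrow> real^3) \<Rightarrow> (real \<Rightarrow> real^3) \<Rightarrow> real \<Rightarrow> real^3" where
  "ND_vector G K mu v s = (- K s) *\<^sub>R mu s + G s *\<^sub>R v s"

definition unit_ND_vector :: "(real \<Rightarrow> real) \<Rightarrow> (real \<Rightarrow> real) \<Rightarrow> (real \<Rightarrow> real^3) \<Rightarrow> (real \<Rightarrow> real^3) \<Rightarrow> real \<Rightarrow> real^3" where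
  "unit_ND_vector G K mu v s = (1 / norm (ND_vector G K mu v s)) *\<^sub>R ND_vector G K mu v s"

definition const_angle_field :: "real set \<Rightarrow> (real \<Rightarrow> real^3) \<Rightarrow> bool" where
  "const_angle_field I X \<longleftrightarrow> (\<exists>l c. norm l = 1 \<and> (\<forall>s\<in>I. X s \<bullet> l = c))"

definition Wn_helix :: "real set \<Rightarrow> (real \<Rightarrow> real) \<Rightarrow> (real \<Rightarrow> real) \<Rightarrow> (real \<Rightarrow> real^3) \<Rightarrow> (real \<Rightarrow> real^3) \<Rightarrow> bool" where
  "Wn_helix I G K mu v \<longleftrightarrow> const_angle_field I (unit_ND_vector G K mu v)"

definition xi_helix :: "real set \<Rightarrow> (real \<Rightarrow> real^3) \<Rightarrow> bool" where
  "xi_helix I xi \<longleftrightarrow> const_angle_field I xi"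

end

theory Submission
  imports Defs
begin

text \<open>
  Only \<open>\<xi>\<close> matters: the
  ND-vector \<open>-K\<mu> + Gv\<close> equals \<open>\<xi> \<times> \<xi>'\<close>, so \<open>W\<^sub>n/|W\<^sub>n|\<close> is the binormal \<open>b = \<xi> \<times> n\<close> of the
  orthonormal frame \<open>(\<xi>, n, b)\<close>, \<open>n = \<xi>'/|\<xi>'|\<close>, of the spherical curve \<open>\<xi>\<close>, and \<open>b' = -\<tau> n\<close>.

  If \<open>\<xi>\<cdot>d\<close> is constant then \<open>n\<cdot>d = 0\<close>, so \<open>(b\<cdot>d)\<^sup>2 = 1 - (\<xi>\<cdot>d)\<^sup>2\<close> is constant, and so is the
  continuous function \<open>b\<cdot>d\<close> on the interval.
  Conversely, if \<open>b\<cdot>l = e\<close> then \<open>\<tau> (n\<cdot>l) = 0\<close>. If \<open>\<tau>\<close> vanishes identically, \<open>b\<close> itself is a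
  constant direction orthogonal to \<open>\<xi>\<close>. If \<open>e\<^sup>2 = 1\<close>, then \<open>n\<cdot>l = 0\<close> trivially. Otherwise, on the
  open set \<open>{\<tau> \<noteq> 0}\<close> we have \<open>n\<cdot>l = 0\<close> and, differentiating, the Lancret relation
  \<open>|\<xi>'| (\<xi>\<cdot>l) = \<tau> e\<close>; since \<open>(\<xi>\<cdot>l)\<^sup>2 = 1 - e\<^sup>2 > 0\<close> there, these closed conditions force \<open>\<tau> \<noteq> 0\<close>,
  so \<open>{\<tau> \<noteq> 0}\<close> is clopen, hence everything. In both cases \<open>n\<cdot>l = 0\<close> on the whole interval and
  \<open>\<xi>\<cdot>l\<close> is constant.
\<close>

lemma scaleR_triple_product_expansion:
  fixes x y w z :: "real^3"
  shows "(x \<bullet> cross3 y w) *\<^sub>R z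
    = (z \<bullet> cross3 y w) *\<^sub>R x + (z \<bullet> cross3 w x) *\<^sub>R y + (z \<bullet> cross3 x y) *\<^sub>R w"
  by (simp add: cross3_simps forall_3)

lemma cross3_cross3_right: "cross3 (x::real^3) (cross3 y z) = (x \<bullet> z) *\<^sub>R y - (x \<bullet> y) *\<^sub>R z"
  by (simp add: cross3_simps) (simp add: forall_3)

lemma orthonormal_frame_expansion:
  fixes a n z :: "real^3"
  assumes "a \<bullet> a = 1" "n \<bullet> n = 1" "a \<bullet> n = 0"
  shows "z = (z \<bullet> a) *\<^sub>R a + (z \<bullet> n) *\<^sub>R n + (z \<bullet> cross3 a n) *\<^sub>R cross3 a n"
proof -
  have "cross3 n (cross3 a n) = a" "cross3 (cross3 a n) a = n"
    using assms by (simp_all add: cross3_cross3_right cross_skew[of "cross3 a n"] inner_commute)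
  then show ?thesis
    using scaleR_triple_product_expansion[of a n "cross3 a n" z] assms
    by (simp add: cross3_cross3_right inner_commute)
qed

lemma orthonormal_frame_expansion_inner:
  fixes a n z y :: "real^3"
  assumes "a \<bullet> a = 1" "n \<bullet> n = 1" "a \<bullet> n = 0"
  shows "z \<bullet> y = (z \<bullet> a) * (a \<bullet> y) + (z \<bullet> n) * (n \<bullet> y) + (z \<bullet> cross3 a n) * (cross3 a n \<bullet> y)"
  by (subst orthonormal_frame_expansion[OF assms, of z]) (simp add: inner_add_left)

lemma cross3_expansion_orthonormal:
  fixes a n z :: "real^3"
  assumes "a \<bullet> a = 1" "n \<bullet> n = 1" "a \<bullet> n = 0"
  shows "cross3 a z = (z \<bullet> n) *\<^sub>R cross3 a n - (z \<bullet> cross3 a n) *\<^sub>R n"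
proof -
  have "cross3 a (cross3 a n) = - n"
    using assms by (simp add: cross3_cross3_right)
  then show ?thesis
    by (subst orthonormal_frame_expansion[OF assms, of z])
      (simp add: cross_add_right cross_mult_right)
qed

lemma has_vector_derivative_cross3:
  assumes "(f has_vector_derivative f') (at s)" "(g has_vector_derivative g') (at s)"
  shows "((\<lambda>s. cross3 (f s) (g s)) has_vector_derivative (cross3 (f s) g' + cross3 f' (g s))) (at s)"
  using bounded_bilinear.has_vector_derivative
    [OF bilinear_conv_bounded_bilinear[THEN iffD1, OF bilinear_cross] assms] .

lemma has_real_derivative_inner:
  fixes f g :: "real \<Rightarrow> 'a::real_inner"
  assumes "(f has_vector_derivative f') (at s)" "(g has_vector_derivative g') (at s)"
  shows "((\<lambda>s. f s \<bullet> g s) has_real_derivative (f s \<bullet> g' + f' \<bullet> g s)) (at s)"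
  using bounded_bilinear.has_vector_derivative[OF bounded_bilinear_inner assms]
  by (simp add: has_real_derivative_iff_has_vector_derivative)

lemma has_real_derivative_norm:
  fixes f :: "real \<Rightarrow> 'a::real_inner"
  assumes "(f has_vector_derivative f') (at s)" "f s \<noteq> 0"
  shows "((\<lambda>s. norm (f s)) has_real_derivative (sgn (f s) \<bullet> f')) (at s)"
proof -
  have "((\<lambda>s. norm (f s)) has_derivative (\<lambda>h. (h *\<^sub>R f') \<bullet> sgn (f s))) (at s)"
    using has_derivative_compose[OF assms(1)[unfolded has_vector_derivative_def]
        has_derivative_norm[OF assms(2)]] .
  then show ?thesis
    by (simp add: has_field_derivative_def inner_commute mult_commute_abs)
qed

lemma inner_constant_on_open_imp_derivative_zero:
  fixes X Y :: "real \<Rightarrow> 'a::real_inner"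
  assumes "open S" "s \<in> S" "\<And>x. x \<in> S \<Longrightarrow> X x \<bullet> Y x = c"
    and "(X has_vector_derivative X') (at s)" "(Y has_vector_derivative Y') (at s)"
  shows "X s \<bullet> Y' + X' \<bullet> Y s = 0"
proof -
  have "((\<lambda>_. c) has_real_derivative (X s \<bullet> Y' + X' \<bullet> Y s)) (at s)"
    using has_real_derivative_inner[OF assms(4,5)] assms(1-3)
    by (rule has_field_derivative_transform_within_open) auto
  then show ?thesis
    using DERIV_const DERIV_unique by blast
qed

lemma continuous_on_constant_square_imp_constant:
  fixes h :: "'a::topological_space \<Rightarrow> real"
  assumes "connected S" "continuous_on S h" "\<And>x. x \<in> S \<Longrightarrow> (h x)\<^sup>2 = a"
  shows "h constant_on S"
proof (rule continuous_finite_range_constant[OF assms(1,2)])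
  have "h x \<in> {sqrt a, - sqrt a}" if "x \<in> S" for x
    using real_sqrt_abs[of "h x"] assms(3)[OF that] by (auto simp: abs_if)
  then have "h ` S \<subseteq> {sqrt a, - sqrt a}"
    by blast
  then show "finite (h ` S)"
    by (rule finite_subset) simp
qed

lemma const_angle_field_cong:
  "(\<And>s. s \<in> I \<Longrightarrow> X s = Y s) \<Longrightarrow> const_angle_field I X \<longleftrightarrow> const_angle_field I Y"
  by (simp add: const_angle_field_def)

locale regular_spherical_curve =
  fixes I :: "real set" and t t' t'' :: "real \<Rightarrow> real^3"
  assumes interval: "is_interval I" and open_domain: "open I" and nonempty: "I \<noteq> {}"
    and t_derivative: "\<And>s. s \<in> I \<Longrightarrow> (t has_vector_derivative t' s) (at s)"
    and t'_derivative: "\<And>s. s \<in> I \<Longrightarrow> (t' has_vector_derivative t'' s) (at s)"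
    and continuous_t'': "continuous_on I t''"
    and norm_t: "\<And>s. s \<in> I \<Longrightarrow> norm (t s) = 1"
    and t'_nonzero: "\<And>s. s \<in> I \<Longrightarrow> t' s \<noteq> 0"
begin

definition curvature :: "real \<Rightarrow> real" where "curvature s = norm (t' s)"

definition normal :: "real \<Rightarrow> real^3" where "normal s = sgn (t' s)"

definition binormal :: "real \<Rightarrow> real^3" where "binormal s = cross3 (t s) (normal s)"

definition torsion :: "real \<Rightarrow> real" where "torsion s = t'' s \<bullet> binormal s / curvature s"

lemma curvature_pos: "s \<in> I \<Longrightarrow> curvature s > 0"
  by (simp add: curvature_def t'_nonzero)

lemma t'_eq_curvature_normal: "t' s = curvature s *\<^sub>R normal s"
  by (cases "t' s = 0") (simp_all add: curvature_def normal_def sgn_div_norm)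

lemma inner_t_t: "s \<in> I \<Longrightarrow> t s \<bullet> t s = 1"
  by (simp add: norm_t dot_square_norm)

lemma inner_t_t': "s \<in> I \<Longrightarrow> t s \<bullet> t' s = 0"
  using inner_constant_on_open_imp_derivative_zero[OF open_domain _ inner_t_t t_derivative t_derivative]
  by (simp add: inner_commute)

lemma inner_t_t'':
  assumes "s \<in> I"
  shows "t s \<bullet> t'' s = - (curvature s)\<^sup>2"
  using inner_constant_on_open_imp_derivative_zero[OF open_domain assms inner_t_t' t_derivative t'_derivative] assms
  by (simp add: curvature_def power2_norm_eq_inner eq_neg_iff_add_eq_0)

lemma norm_normal: "s \<in> I \<Longrightarrow> norm (normal s) = 1"
  by (simp add: normal_def t'_nonzero norm_sgn)

lemma inner_normal_normal: "s \<in> I \<Longrightarrow> normal s \<bullet> normal s = 1"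
  by (simp add: norm_normal dot_square_norm)

lemma inner_t_normal: "s \<in> I \<Longrightarrow> t s \<bullet> normal s = 0"
  by (simp add: normal_def sgn_div_norm inner_t_t')

lemmas frame_orthonormal = inner_t_t inner_normal_normal inner_t_normal

lemma frame_expansion_inner:
  "s \<in> I \<Longrightarrow> z \<bullet> y = (z \<bullet> t s) * (t s \<bullet> y) + (z \<bullet> normal s) * (normal s \<bullet> y)
    + (z \<bullet> binormal s) * (binormal s \<bullet> y)"
  unfolding binormal_def by (rule orthonormal_frame_expansion_inner[OF frame_orthonormal])

lemma norm_binormal: "s \<in> I \<Longrightarrow> norm (binormal s) = 1"
  using norm_cross_dot[of "t s" "normal s"] unfolding binormal_def
  by (simp add: inner_t_normal norm_t norm_normal abs_square_eq_1)

lemma inner_t_binormal: "t s \<bullet> binormal s = 0"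
  by (simp add: binormal_def dot_cross_self)

lemma frame_components_sum_squares:
  "s \<in> I \<Longrightarrow> norm l = 1 \<Longrightarrow> (t s \<bullet> l)\<^sup>2 + (normal s \<bullet> l)\<^sup>2 + (binormal s \<bullet> l)\<^sup>2 = 1"
  using frame_expansion_inner[of s l l] by (simp add: inner_commute power2_eq_square dot_square_norm)

lemma binormal_eq_scaled_cross: "binormal s = (1 / curvature s) *\<^sub>R cross3 (t s) (t' s)"
  by (simp add: binormal_def normal_def curvature_def sgn_div_norm cross_mult_right divide_inverse_commute)

lemma norm_cross_t_t': "s \<in> I \<Longrightarrow> norm (cross3 (t s) (t' s)) = curvature s"
  using norm_cross_dot[of "t s" "t' s"] by (simp add: inner_t_t' norm_t curvature_def)

lemma cross_t_t'':
  "s \<in> I \<Longrightarrow>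
    cross3 (t s) (t'' s) = (t'' s \<bullet> normal s) *\<^sub>R binormal s - (t'' s \<bullet> binormal s) *\<^sub>R normal s"
  unfolding binormal_def by (rule cross3_expansion_orthonormal[OF frame_orthonormal])

lemma binormal_derivative:
  assumes s: "s \<in> I"
  shows "(binormal has_vector_derivative (- torsion s) *\<^sub>R normal s) (at s)"
proof -
  have "((\<lambda>s. norm (t' s)) has_real_derivative normal s \<bullet> t'' s) (at s)"
    unfolding normal_def by (rule has_real_derivative_norm[OF t'_derivative[OF s] t'_nonzero[OF s]])
  from DERIV_inverse_fun[OF this]
  have "((\<lambda>s. 1 / curvature s) has_real_derivative - (normal s \<bullet> t'' s) / (curvature s)\<^sup>2) (at s)"
    using t'_nonzero[OF s]
    by (simp add: curvature_def inverse_eq_divide power2_eq_square)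
  from has_vector_derivative_scaleR[OF this
      has_vector_derivative_cross3[OF t_derivative[OF s] t'_derivative[OF s]]]
  have "(binormal has_vector_derivative
      (1 / curvature s) *\<^sub>R cross3 (t s) (t'' s)
      - ((normal s \<bullet> t'' s) / (curvature s)\<^sup>2) *\<^sub>R cross3 (t s) (t' s)) (at s)"
    by (simp add: binormal_eq_scaled_cross[abs_def] scaleR_add_right)
  also have "(1 / curvature s) *\<^sub>R cross3 (t s) (t'' s)
      - ((normal s \<bullet> t'' s) / (curvature s)\<^sup>2) *\<^sub>R cross3 (t s) (t' s) = (- torsion s) *\<^sub>R normal s"
    using curvature_pos[OF s]
    by (simp add: cross_t_t''[OF s] t'_eq_curvature_normal[of s] cross_mult_right binormal_def[symmetric] torsion_def
        inner_commute power2_eq_square algebra_simps)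
  finally show ?thesis .
qed

lemma continuous_on_t: "continuous_on I t"
  using t_derivative by (meson continuous_at_imp_continuous_on has_vector_derivative_continuous)

lemma continuous_on_t': "continuous_on I t'"
  using t'_derivative by (meson continuous_at_imp_continuous_on has_vector_derivative_continuous)

lemma continuous_on_curvature: "continuous_on I curvature"
  unfolding curvature_def[abs_def] using continuous_on_t' by (intro continuous_intros)

lemma continuous_on_normal: "continuous_on I normal"
  unfolding normal_def[abs_def] using continuous_on_t' t'_nonzero by (intro continuous_intros) auto

lemma continuous_on_binormal: "continuous_on I binormal"
  unfolding binormal_def[abs_def] using continuous_on_t continuous_on_normal by (rule continuous_on_cross)

lemma continuous_on_torsion: "continuous_on I torsion"
  unfolding torsion_def[abs_def]
  using continuous_t'' continuous_on_binormal continuous_on_curvature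
  by (intro continuous_intros) (auto simp: curvature_def t'_nonzero)

lemma tangent_helix_imp_binormal_helix:
  assumes "const_angle_field I t"
  shows "const_angle_field I binormal"
proof -
  obtain d c where d: "norm d = 1" and c: "\<And>s. s \<in> I \<Longrightarrow> t s \<bullet> d = c"
    using assms unfolding const_angle_field_def by blast
  have normal_d: "normal s \<bullet> d = 0" if s: "s \<in> I" for s
  proof -
    have "t' s \<bullet> d = 0"
      using inner_constant_on_open_imp_derivative_zero[OF open_domain s c t_derivative[OF s]
          has_vector_derivative_const] by simp
    then show ?thesis
      using curvature_pos[OF s] by (simp add: t'_eq_curvature_normal[of s])
  qed
  have "(binormal s \<bullet> d)\<^sup>2 = 1 - c\<^sup>2" if "s \<in> I" for s
    using frame_components_sum_squares[OF that d] c[OF that] normal_d[OF that] by simp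
  moreover have "continuous_on I (\<lambda>s. binormal s \<bullet> d)"
    using continuous_on_binormal by (intro continuous_intros)
  ultimately have "(\<lambda>s. binormal s \<bullet> d) constant_on I"
    using continuous_on_constant_square_imp_constant[OF is_interval_connected[OF interval]] by blast
  then show ?thesis
    using d unfolding const_angle_field_def constant_on_def by blast
qed

lemma torsion_normal_component_eq_0:
  assumes "\<And>s. s \<in> I \<Longrightarrow> binormal s \<bullet> l = e" "s \<in> I"
  shows "torsion s * (normal s \<bullet> l) = 0"
  using inner_constant_on_open_imp_derivative_zero[OF open_domain assms(2,1)
      binormal_derivative[OF assms(2)] has_vector_derivative_const] by simp

lemma tangent_helix_if_normal_orthogonal:
  assumes "norm l = 1" "\<And>s. s \<in> I \<Longrightarrow> normal s \<bullet> l = 0"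
  shows "const_angle_field I t"
proof -
  have "((\<lambda>s. t s \<bullet> l) has_real_derivative 0) (at s within I)" if s: "s \<in> I" for s
    using has_real_derivative_inner[OF t_derivative[OF s] has_vector_derivative_const, of l] assms(2)[OF s]
    by (simp add: t'_eq_curvature_normal[of s] has_field_derivative_at_within)
  then obtain c where "\<forall>s\<in>I. t s \<bullet> l = c"
    using has_field_derivative_zero_constant[OF is_interval_convex[OF interval]] by blast
  then show ?thesis
    using assms(1) unfolding const_angle_field_def by blast
qed

lemma lancret_relation:
  assumes S: "open S" "S \<subseteq> I" and normal_l: "\<And>s. s \<in> S \<Longrightarrow> normal s \<bullet> l = 0"
    and e: "\<And>s. s \<in> I \<Longrightarrow> binormal s \<bullet> l = e" and s: "s \<in> S"
  shows "curvature s * (t s \<bullet> l) = torsion s * e"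
proof -
  have sI: "s \<in> I"
    using S(2) s by blast
  have "t' x \<bullet> l = 0" if "x \<in> S" for x
    using normal_l[OF that] by (simp add: t'_eq_curvature_normal[of x])
  from inner_constant_on_open_imp_derivative_zero
    [OF S(1) s this t'_derivative[OF sI] has_vector_derivative_const]
  have "t'' s \<bullet> l = 0"
    by simp
  moreover have "t'' s \<bullet> l = - (curvature s)\<^sup>2 * (t s \<bullet> l) + curvature s * (torsion s * e)"
    using frame_expansion_inner[OF sI, of "t'' s" l] inner_t_t''[OF sI] normal_l[OF s] e[OF sI]
      curvature_pos[OF sI]
    by (simp add: torsion_def inner_commute)
  ultimately show ?thesis
    using curvature_pos[OF sI] by (simp add: power2_eq_square)
qed

lemma torsion_nonvanishing:
  assumes l: "norm l = 1" and e: "\<And>s. s \<in> I \<Longrightarrow> binormal s \<bullet> l = e" and "e\<^sup>2 < 1"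
    and s1: "s1 \<in> I" "torsion s1 \<noteq> 0" and s: "s \<in> I"
  shows "torsion s \<noteq> 0"
proof -
  define S where "S = {x \<in> I. torsion x \<noteq> 0}"
  define T where "T = {x \<in> I. (normal x \<bullet> l, curvature x * (t x \<bullet> l) - torsion x * e) = (0, 0)}"
  have "I \<inter> torsion -` (- {0}) = S"
    by (auto simp: S_def)
  then have "open S"
    using continuous_open_preimage[OF continuous_on_torsion open_domain, of "- {0}"] by auto
  moreover have "S \<subseteq> I"
    by (auto simp: S_def)
  moreover have "normal x \<bullet> l = 0" if "x \<in> S" for x
    using torsion_normal_component_eq_0[OF e, of x] that by (auto simp: S_def)
  ultimately have "S \<subseteq> T"
    using lancret_relation[OF _ _ _ e] by (auto simp: T_def)
  moreover have "T \<subseteq> S"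
  proof
    fix x assume "x \<in> T"
    then have x: "x \<in> I" and "normal x \<bullet> l = 0" and lancret: "curvature x * (t x \<bullet> l) = torsion x * e"
      by (auto simp: T_def)
    then have "(t x \<bullet> l)\<^sup>2 = 1 - e\<^sup>2"
      using frame_components_sum_squares[OF x l] e[OF x] by simp
    then have "curvature x * (t x \<bullet> l) \<noteq> 0"
      using \<open>e\<^sup>2 < 1\<close> curvature_pos[OF x] by auto
    then show "x \<in> S"
      using x lancret by (simp add: S_def)
  qed
  moreover have "closedin (top_of_set I) T"
    unfolding T_def using continuous_on_normal continuous_on_curvature continuous_on_t continuous_on_torsion
    by (intro continuous_closedin_preimage_constant continuous_intros)
  ultimately have "S = {} \<or> S = I"
    using is_interval_connected[OF interval] \<open>open S\<close> \<open>S \<subseteq> I\<close>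
    unfolding connected_clopen by (metis open_subset subset_antisym)
  then show ?thesis
    using s1 s by (auto simp: S_def)
qed

lemma binormal_helix_imp_tangent_helix:
  assumes "const_angle_field I binormal"
  shows "const_angle_field I t"
proof -
  obtain l e where l: "norm l = 1" and e: "\<And>s. s \<in> I \<Longrightarrow> binormal s \<bullet> l = e"
    using assms unfolding const_angle_field_def by blast
  consider (planar) "\<And>s. s \<in> I \<Longrightarrow> torsion s = 0" | (degenerate) "e\<^sup>2 \<ge> 1"
    | (twisted) s1 where "s1 \<in> I" "torsion s1 \<noteq> 0" "e\<^sup>2 < 1"
    by fastforce
  then show ?thesis
  proof cases
    case planar
    then obtain b where b: "\<And>s. s \<in> I \<Longrightarrow> binormal s = b"
      using has_vector_derivative_zero_constant[OF is_interval_convex[OF interval], of binormal]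
        binormal_derivative by (metis has_vector_derivative_at_within scaleR_eq_0_iff neg_0_equal_iff_equal)
    obtain s0 where s0: "s0 \<in> I"
      using nonempty by blast
    have "norm b = 1"
      using b[OF s0] norm_binormal[OF s0] by simp
    moreover have "\<forall>s\<in>I. t s \<bullet> b = 0"
      using b inner_t_binormal by metis
    ultimately show ?thesis
      unfolding const_angle_field_def by blast
  next
    case degenerate
    then have "normal s \<bullet> l = 0" if "s \<in> I" for s
      using frame_components_sum_squares[OF that l] e[OF that]
      by (smt (verit) zero_le_power2 zero_less_power2)
    then show ?thesis
      using tangent_helix_if_normal_orthogonal[OF l] by blast
  next
    case twisted
    then show ?thesis
      using tangent_helix_if_normal_orthogonal[OF l] torsion_normal_component_eq_0[OF e]
        torsion_nonvanishing[OF l e] by (meson mult_eq_0_iff)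
  qed
qed

theorem binormal_helix_iff_tangent_helix: "const_angle_field I binormal \<longleftrightarrow> const_angle_field I t"
  using binormal_helix_imp_tangent_helix tangent_helix_imp_binormal_helix by blast

end

lemma smooth_on_twice_differentiable:
  assumes "smooth_on I f"
  obtains f' f'' where "\<And>s. s \<in> I \<Longrightarrow> (f has_vector_derivative f' s) (at s)"
    and "\<And>s. s \<in> I \<Longrightarrow> (f' has_vector_derivative f'' s) (at s)"
    and "continuous_on I f''"
proof -
  obtain D where D0: "D 0 = f" and D: "\<And>n s. s \<in> I \<Longrightarrow> (D n has_vector_derivative D (Suc n) s) (at s)"
    using assms unfolding smooth_on_def by blast
  have "continuous_on I (D 2)"
    using D[of _ 2] by (meson continuous_at_imp_continuous_on has_vector_derivative_continuous)
  then show ?thesis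
    using that[of "D 1" "D 2"] D[of _ 0] D[of _ 1] D0 by (simp add: numeral_2_eq_2)
qed

lemma cross3_Darboux_derivative:
  fixes xi v :: "real^3"
  assumes "xi \<bullet> xi = 1" "xi \<bullet> v = 0"
  shows "cross3 xi (G *\<^sub>R cross3 v xi + K *\<^sub>R v) = (- K) *\<^sub>R cross3 v xi + G *\<^sub>R v"
  using assms cross_skew[of xi v]
  by (simp add: cross_add_right cross_mult_right cross3_cross3_right inner_commute)

lemma Darboux_derivative_nonzero:
  fixes xi v :: "real^3"
  assumes "xi \<bullet> xi = 1" "v \<bullet> v = 1" "xi \<bullet> v = 0" "(G, K) \<noteq> (0, 0)"
  shows "G *\<^sub>R cross3 v xi + K *\<^sub>R v \<noteq> 0"
proof
  assume zero: "G *\<^sub>R cross3 v xi + K *\<^sub>R v = 0"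
  have "(norm (cross3 v xi))\<^sup>2 = 1"
    using norm_cross_dot[of v xi] assms(1-3) by (simp add: inner_commute dot_square_norm power_mult_distrib)
  then have "cross3 v xi \<bullet> (G *\<^sub>R cross3 v xi + K *\<^sub>R v) = G"
    and "v \<bullet> (G *\<^sub>R cross3 v xi + K *\<^sub>R v) = K"
    using assms(2) by (simp_all add: inner_add_right dot_cross_self power2_norm_eq_inner)
  then show False
    using zero assms(4) by simp
qed

theorem theorem13:
  fixes I :: "real set"
    and r xi mu v :: "real \<Rightarrow> real^3"
    and G K T :: "real \<Rightarrow> real"
  assumes I: "is_interval I" "open I" "I \<noteq> {}"
    and r_smooth: "smooth_on I r"
    and arclength: "\<And>s. s \<in> I \<Longrightarrow> norm (vector_derivative r (at s)) = 1"
    and xi_smooth: "smooth_on I xi"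
    and v_smooth: "smooth_on I v"
    and xi_unit: "\<And>s. s \<in> I \<Longrightarrow> norm (xi s) = 1"
    and v_unit: "\<And>s. s \<in> I \<Longrightarrow> norm (v s) = 1"
    and xi_in_plane: "\<And>s. s \<in> I \<Longrightarrow> xi s \<bullet> v s = 0"
    and mu_def: "\<And>s. s \<in> I \<Longrightarrow> mu s = cross3 (v s) (xi s)"
    and d_xi: "\<And>s. s \<in> I \<Longrightarrow> (xi has_vector_derivative (G s *\<^sub>R mu s + K s *\<^sub>R v s)) (at s)"
    and d_mu: "\<And>s. s \<in> I \<Longrightarrow> (mu has_vector_derivative (- G s *\<^sub>R xi s + T s *\<^sub>R v s)) (at s)"
    and d_v: "\<And>s. s \<in> I \<Longrightarrow> (v has_vector_derivative (- K s *\<^sub>R xi s - T s *\<^sub>R mu s)) (at s)"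
    and GK_nonzero: "\<And>s. s \<in> I \<Longrightarrow> (G s, K s) \<noteq> (0, 0)"
  shows "Wn_helix I G K mu v \<longleftrightarrow> xi_helix I xi"
proof -
  obtain xi' xi'' where xi'_derivative: "\<And>s. s \<in> I \<Longrightarrow> (xi has_vector_derivative xi' s) (at s)"
    and xi''_derivative: "\<And>s. s \<in> I \<Longrightarrow> (xi' has_vector_derivative xi'' s) (at s)"
    and "continuous_on I xi''"
    using smooth_on_twice_differentiable[OF xi_smooth] by blast
  have xi': "xi' s = G s *\<^sub>R cross3 (v s) (xi s) + K s *\<^sub>R v s" if "s \<in> I" for s
    using xi'_derivative[OF that] d_xi[OF that] mu_def[OF that] by (simp add: vector_derivative_unique_at)
  have frame: "xi s \<bullet> xi s = 1" "v s \<bullet> v s = 1" if "s \<in> I" for s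
    using xi_unit[OF that] v_unit[OF that] by (simp_all add: dot_square_norm)
  interpret regular_spherical_curve I xi xi' xi''
  proof
    show "xi' s \<noteq> 0" if "s \<in> I" for s
      using Darboux_derivative_nonzero[OF frame[OF that] xi_in_plane[OF that] GK_nonzero[OF that]]
        xi'[OF that] by simp
  qed (use I xi_unit xi'_derivative xi''_derivative \<open>continuous_on I xi''\<close> in auto)
  have "unit_ND_vector G K mu v s = binormal s" if "s \<in> I" for s
  proof -
    have "ND_vector G K mu v s = cross3 (xi s) (xi' s)"
      unfolding ND_vector_def xi'[OF that] mu_def[OF that]
      using cross3_Darboux_derivative[OF frame(1)[OF that] xi_in_plane[OF that]] by simp
    then show ?thesis
      by (simp add: unit_ND_vector_def norm_cross_t_t'[OF that] binormal_eq_scaled_cross)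
  qed
  then show ?thesis
    unfolding Wn_helix_def xi_helix_def
    using const_angle_field_cong binormal_helix_iff_tangent_helix by metis
qed

end
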